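(* In the semi-discrete wave setting described in the context, assume that the reference state $u$ satisfies the discrete non-degeneracy condition: for all $t>0$ and all $j\in\{1,\dots,N-1\}$, $\frac12u_{(2,j)}(t)-2u_{(1,j)}(t)\neq0$. Let $Z_d=U_0(T)=(u(T),\partial_tu(T))$. Then there exist a neighborhood $\mathcal{V}(0)\subset C([0,T];W_h)$ of $0$ and a neighborhood $\mathcal{V}(Z_d)\subset\mathcal{F}(\mathring\Omega_h)^2$ of $Z_d$ such that for every $Z\in\mathcal{V}(Z_d)$ there exists $\varphi\in\mathcal{V}(0)$ with $U_\varphi(T)=Z$.
   Context: Let $h>0$, integers $M,N\ge2$, grid $\Omega_h=\{(ih,jh):0\le i\le M,0\le j\le N\}$ with nodes indexed $(i,j)$, interior $\mathring\Omega_h=\{1\le i\le M-1,1\le j\le N-1\}$, $\Gamma^1=\{(1,j):1\le j\le N-1\}$; $\mathcal{F}(\mathring\Omega_h)$ is the space of real functions on $\mathring\Omega_h$, extended by $0$ on boundary nodes. For $j=1,\dots,N-1$, $V_j$ equals $(1,0)$ at boundary node $(0,j)$ and $0$ elsewhere, $W_h=\mathrm{span}(V_j)$. Admissible perturbations are $\varphi(t)=\sum_{j=1}^{N-1}h\lambda_j(t)V_j$ with $\lambda_j\in W^{1,\infty}(\mathbb{R}^+)\cap C^1(\mathbb{R}^+)$, $\sup_j\|\lambda_j\|_\infty<1/2$ and $\|\partial_t\lambda_j\|_\infty<1$. $A(\varphi)$ is the operator $[A(\varphi)\phi]_{(i,j)}=h^{-2}(4\phi_{(i,j)}-\phi_{(i+1,j)}-\phi_{(i-1,j)}-\phi_{(i,j+1)}-\phi_{(i,j-1)})$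 for $(i,j)\notin\Gamma^1$ and $[A(\varphi)\phi]_{(1,j)}=h^{-2}\big(2(1+\frac{1}{1+\lambda_j(t)})\phi_{(1,j)}-\frac{2}{2+\lambda_j(t)}\phi_{(2,j)}-\phi_{(1,j+1)}-\phi_{(1,j-1)}\big)$. Given a source $F$ and data $u_0,u_1\in\mathcal{F}(\mathring\Omega_h)$, the perturbed state $u_\varphi$ solves $\partial_t^2u_\varphi+A(\varphi)u_\varphi=F$, $u_\varphi(0)=u_0$, $\partial_tu_\varphi(0)=u_1$, and $U_\varphi=(u_\varphi,\partial_tu_\varphi)$. The reference state is $u=u_{\varphi=0}$ and $U_0=(u,\partial_tu)$. $T>0$ is fixed. *)

theory Defs
  imports "HOL-Analysis.Analysis"
begin

definition interior :: "nat \<Rightarrow> nat \<Rightarrow> (nat \<times> nat) set" where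
  "interior M N = {(i,j). 1 \<le> i \<and> i \<le> M - 1 \<and> 1 \<le> j \<and> j \<le> N - 1}"

text \<open>Membership in F(interior): grid functions vanishing at all non-interior nodes.\<close>
definition in_F :: "nat \<Rightarrow> nat \<Rightarrow> (nat \<times> nat \<Rightarrow> real) \<Rightarrow> bool" where
  "in_F M N w \<longleftrightarrow> (\<forall>p. p \<notin> interior M N \<longrightarrow> w p = 0)"

text \<open>The operator A(phi) at a fixed time, where lam j = lambda_j(t).\<close>
definition Aop :: "real \<Rightarrow> (nat \<Rightarrow> real) \<Rightarrow> (nat \<times> nat \<Rightarrow> real) \<Rightarrow> nat \<times> nat \<Rightarrow> real" where
  "Aop h lam w p = (case p of (i,j) \<Rightarrow>
     if i = 1 then
       (2 * (1 + 1 / (1 + lam j)) * w (1,j) - (2 / (2 + lam j)) * w (2,j)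
         - w (1, j+1) - w (1, j-1)) / h\<^sup>2
     else
       (4 * w (i,j) - w (i+1,j) - w (i-1,j) - w (i,j+1) - w (i,j-1)) / h\<^sup>2)"

definition admissible :: "nat \<Rightarrow> (real \<Rightarrow> nat \<Rightarrow> real) \<Rightarrow> bool" where
  "admissible N lam \<longleftrightarrow>
     (\<exists>dl :: real \<Rightarrow> nat \<Rightarrow> real.
        (\<forall>j\<in>{1..N-1}. \<forall>t\<ge>0. ((\<lambda>s. lam s j) has_real_derivative dl t j) (at t within {0..}))
      \<and> (\<forall>j\<in>{1..N-1}. continuous_on {0..} (\<lambda>t. dl t j))
      \<and> (\<exists>c<1/2. \<forall>j\<in>{1..N-1}. \<forall>t\<ge>0. \<bar>lam t j\<bar> \<le> c)
      \<and> (\<forall>j\<in>{1..N-1}. \<exists>c<1. \<forall>t\<ge>0. \<bar>dl t j\<bar> \<le> c))"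

definition wave_sol ::
  "real \<Rightarrow> nat \<Rightarrow> nat \<Rightarrow> (real \<Rightarrow> nat \<times> nat \<Rightarrow> real) \<Rightarrow> (real \<Rightarrow> nat \<Rightarrow> real)
   \<Rightarrow> (nat \<times> nat \<Rightarrow> real) \<Rightarrow> (nat \<times> nat \<Rightarrow> real)
   \<Rightarrow> (real \<Rightarrow> nat \<times> nat \<Rightarrow> real) \<Rightarrow> (real \<Rightarrow> nat \<times> nat \<Rightarrow> real) \<Rightarrow> bool" where
  "wave_sol h M N F lam u0 u1 u v \<longleftrightarrow>
     (\<forall>t\<ge>0. in_F M N (u t))
   \<and> u 0 = u0 \<and> v 0 = u1
   \<and> (\<forall>t\<ge>0. \<forall>p. ((\<lambda>s. u s p) has_real_derivative v t p) (at t within {0..}))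
   \<and> (\<forall>t\<ge>0. \<forall>p\<in>interior M N.
        ((\<lambda>s. v s p) has_real_derivative (F t p - Aop h (lam t) (u t) p)) (at t within {0..}))"

end

theory Submission
  imports Defs "HOL-Computational_Algebra.Polynomial"
begin

text \<open>
  The control is built explicitly. The deviation of the target from the free state
  \<open>(u(T), u'(T))\<close> is produced by a correction \<open>w\<close>, supported in the window \<open>[T/2, T+1]\<close>,
  that satisfies the unperturbed scheme at every node off the first row: reading the scheme
  at node \<open>(i+1,j)\<close> as a formula for row \<open>i\<close>, \<open>w\<close> is computed sideways from its last row,
  a polynomial in \<open>t - T\<close> that carries the Taylor data of the target and is flat at both
  ends of the window. What remains is a flux \<open>E\<close> in the first row, which the perturbed
  first-row stencil absorbs exactly when \<open>\<lambda>\<^sub>j\<close> solves \<open>R \<lambda>\<^sub>j^2 + B \<lambda>\<^sub>j + 2 E = 0\<close>, with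
  \<open>B\<close> close to \<open>4 u(1,j) - u(2,j)\<close>. The non-degeneracy hypothesis keeps \<open>B\<close> away from
  zero, so for small targets the root vanishing with \<open>E\<close> exists, is smooth, and meets the
  admissibility bounds, uniformly in time by compactness of the window.
\<close>

section \<open>Polynomials flat at the ends of the window\<close>

text \<open>Window polynomials are written in \<open>s = t - T\<close>, so the window ends are \<open>s = -T/2\<close>
  and \<open>s = 1\<close>.\<close>

definition flat_ends :: "real \<Rightarrow> nat \<Rightarrow> real poly \<Rightarrow> bool" where
  "flat_ends T m P \<longleftrightarrow> [:T/2,1:]^m dvd P \<and> [:-1,1:]^m dvd P"

definition window :: "real \<Rightarrow> real poly \<Rightarrow> real \<Rightarrow> real" where
  "window T P t = (if t \<in> {T/2..T+1} then poly P (t - T) else 0)"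

lemma power_linear_dvd_pderiv:
  fixes P :: "real poly"
  assumes "[:c,1:]^Suc m dvd P"
  shows "[:c,1:]^m dvd pderiv P"
proof -
  obtain Q where Q: "P = [:c,1:]^Suc m * Q" using assms by (auto elim: dvdE)
  have "pderiv P = [:c,1:]^m * ([:c,1:] * pderiv Q + smult (of_nat (Suc m)) Q * pderiv [:c,1:])"
    unfolding Q pderiv_mult pderiv_power_Suc by (simp add: algebra_simps)
  then show ?thesis by simp
qed

lemma flat_ends_pderiv: "flat_ends T (Suc m) P \<Longrightarrow> flat_ends T m (pderiv P)"
  unfolding flat_ends_def using power_linear_dvd_pderiv by blast

lemma flat_ends_mono: "flat_ends T m P \<Longrightarrow> n \<le> m \<Longrightarrow> flat_ends T n P"
  unfolding flat_ends_def by (meson dvd_trans le_imp_power_dvd)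

lemma flat_ends_dvd: "flat_ends T m P \<Longrightarrow> P dvd Q \<Longrightarrow> flat_ends T m Q"
  unfolding flat_ends_def using dvd_trans by blast

lemma flat_ends_add: "flat_ends T m P \<Longrightarrow> flat_ends T m Q \<Longrightarrow> flat_ends T m (P + Q)"
  and flat_ends_diff: "flat_ends T m P \<Longrightarrow> flat_ends T m Q \<Longrightarrow> flat_ends T m (P - Q)"
  and flat_ends_smult: "flat_ends T m P \<Longrightarrow> flat_ends T m (smult a P)"
  and flat_ends_mult: "flat_ends T m P \<Longrightarrow> flat_ends T m (Q * P)"
  and flat_ends_zero: "flat_ends T m 0"
  unfolding flat_ends_def by (auto intro: dvd_smult)

lemma flat_ends_roots:
  assumes "flat_ends T (Suc m) P"
  shows "poly P (-(T/2)) = 0" "poly P 1 = 0"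
proof -
  have "[:T/2,1:] dvd P" "[:-1,1:] dvd P"
    using assms dvd_trans dvd_power[of "Suc m"] unfolding flat_ends_def by blast+
  then show "poly P (-(T/2)) = 0" "poly P 1 = 0" by (simp_all add: poly_eq_0_iff_dvd)
qed

lemma window_has_derivative:
  assumes "T > 0" and "flat_ends T 2 P"
  shows "(window T P has_real_derivative window T (pderiv P) t) (at t)"
proof -
  let ?S = "{T/2..T+1}"
  have P: "poly P (-(T/2)) = 0" "poly P 1 = 0"
    using flat_ends_roots[of T 1 P] assms(2) by (simp_all add: numeral_2_eq_2)
  have P': "poly (pderiv P) (-(T/2)) = 0" "poly (pderiv P) 1 = 0"
    using flat_ends_roots[of T 0 "pderiv P"] flat_ends_pderiv[of T 1 P] assms(2)
    by (simp_all add: numeral_2_eq_2)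
  have junction: "x \<in> closure ?S \<Longrightarrow> x \<in> closure (-?S) \<Longrightarrow> x = T/2 \<or> x = T+1" for x
    using assms(1) by (auto simp: closure_complement)
  have shifted: "((\<lambda>x. poly P (x - T)) has_real_derivative poly (pderiv P) (x - T)) (at x within A)"
    for x A
  proof -
    have "((\<lambda>x. x - T) has_real_derivative 1) (at x within A)"
      by (auto intro!: derivative_eq_intros)
    from DERIV_chain2[OF poly_DERIV this] show ?thesis by simp
  qed
  have "((\<lambda>x. if x \<in> ?S then poly P (x - T) else 0) has_derivative
      (if t \<in> ?S then (\<lambda>h. poly (pderiv P) (t - T) * h) else (\<lambda>h. 0))) (at t within (?S \<union> -?S))"
    apply (rule has_derivative_If_within_closures
        [where f'="\<lambda>x h. poly (pderiv P) (x - T) * h" and g'="\<lambda>x h. 0"])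
    subgoal using shifted unfolding has_field_derivative_def by blast
    subgoal by simp
    subgoal using junction[of t] P by (auto simp: field_simps)
    subgoal using junction[of t] P' by (auto simp: field_simps fun_eq_iff)
    by simp
  moreover have "(*) (0::real) = (\<lambda>h. 0)" by auto
  ultimately have "((\<lambda>x. if x \<in> ?S then poly P (x - T) else 0) has_derivative
      (*) (window T (pderiv P) t)) (at t)"
    unfolding window_def by (cases "t \<in> ?S") auto
  then show ?thesis unfolding has_field_derivative_def window_def .
qed

lemma window_add: "window T (P + Q) t = window T P t + window T Q t"
  and window_diff: "window T (P - Q) t = window T P t - window T Q t"
  and window_smult: "window T (smult a P) t = a * window T P t"
  unfolding window_def by auto

lemma window_outside: "t \<notin> {T/2..T+1} \<Longrightarrow> window T P t = 0"
  and window_zero [simp]: "window T 0 t = 0"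
  unfolding window_def by auto

lemma window_at_T: "T > 0 \<Longrightarrow> window T P T = coeff P 0"
  unfolding window_def by (auto simp: poly_0_coeff_0)

section \<open>Coefficient bounds\<close>

definition coeff_bounded :: "real \<Rightarrow> nat \<Rightarrow> real poly \<Rightarrow> bool" where
  "coeff_bounded c D P \<longleftrightarrow> degree P \<le> D \<and> (\<forall>k. \<bar>coeff P k\<bar> \<le> c)"

definition coeff_norm :: "real poly \<Rightarrow> real" where
  "coeff_norm Q = (\<Sum>i\<le>degree Q. \<bar>coeff Q i\<bar>)"

lemma abs_coeff_le_coeff_norm: "\<bar>coeff Q m\<bar> \<le> coeff_norm Q"
proof (cases "m \<le> degree Q")
  case True then show ?thesis unfolding coeff_norm_def by (intro member_le_sum) auto
next
  case False then show ?thesis unfolding coeff_norm_def by (simp add: coeff_eq_0 sum_nonneg)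
qed

lemma coeff_norm_nonneg: "0 \<le> coeff_norm Q"
  unfolding coeff_norm_def by (simp add: sum_nonneg)

lemma coeff_bounded_add:
    "coeff_bounded c1 D P \<Longrightarrow> coeff_bounded c2 D Q \<Longrightarrow> coeff_bounded (c1 + c2) D (P + Q)"
  and coeff_bounded_diff:
    "coeff_bounded c1 D P \<Longrightarrow> coeff_bounded c2 D Q \<Longrightarrow> coeff_bounded (c1 + c2) D (P - Q)"
  unfolding coeff_bounded_def
  by (auto intro: order.trans[OF degree_add_le] order.trans[OF degree_diff_le] add_mono
      order.trans[OF abs_triangle_ineq] order.trans[OF abs_triangle_ineq4])

lemma coeff_bounded_smult: "coeff_bounded c D P \<Longrightarrow> coeff_bounded (\<bar>a\<bar> * c) D (smult a P)"
  unfolding coeff_bounded_def by (auto simp: abs_mult intro: mult_left_mono)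

lemma coeff_bounded_mono: "coeff_bounded c D P \<Longrightarrow> c \<le> c' \<Longrightarrow> coeff_bounded c' D P"
  unfolding coeff_bounded_def by (auto intro: order.trans)

lemma coeff_bounded_zero: "0 \<le> c \<Longrightarrow> coeff_bounded c D 0"
  unfolding coeff_bounded_def by auto

lemma coeff_bounded_nonneg: "coeff_bounded c D P \<Longrightarrow> 0 \<le> c"
  unfolding coeff_bounded_def using abs_ge_zero order.trans by blast

lemma coeff_bounded_pderiv: "coeff_bounded c D P \<Longrightarrow> coeff_bounded (real D * c) D (pderiv P)"
  unfolding coeff_bounded_def
proof safe
  assume deg: "degree P \<le> D" and c: "\<forall>k. \<bar>coeff P k\<bar> \<le> c"
  show "degree (pderiv P) \<le> D" using deg degree_pderiv[of P] by auto
  fix k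
  show "\<bar>coeff (pderiv P) k\<bar> \<le> real D * c"
  proof (cases "Suc k \<le> D")
    case True
    then show ?thesis using c
      by (auto simp: coeff_pderiv abs_mult intro!: mult_mono intro: order.trans[OF abs_ge_zero])
  next
    case False
    then have "coeff P (Suc k) = 0" using deg by (intro coeff_eq_0) auto
    then show ?thesis using c[rule_format, of 0] by (simp add: coeff_pderiv)
  qed
qed

lemma sum_abs_coeff_le_bounded:
  assumes "coeff_bounded c D P"
  shows "(\<Sum>i\<le>n. \<bar>coeff P i\<bar>) \<le> real (Suc D) * c"
proof -
  have deg: "degree P \<le> D" and c: "\<And>k. \<bar>coeff P k\<bar> \<le> c"
    using assms unfolding coeff_bounded_def by auto
  have "(\<Sum>i\<le>n. \<bar>coeff P i\<bar>) \<le> (\<Sum>i\<le>max n D. \<bar>coeff P i\<bar>)"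
    by (rule sum_mono2) auto
  also have "\<dots> = (\<Sum>i\<le>D. \<bar>coeff P i\<bar>)"
    using deg by (intro sum.mono_neutral_right) (auto simp: coeff_eq_0)
  also have "\<dots> \<le> real (Suc D) * c"
    using sum_bounded_above[of "{..D}" "\<lambda>i. \<bar>coeff P i\<bar>" c] c by auto
  finally show ?thesis .
qed

lemma coeff_bounded_mult:
  assumes "coeff_bounded c D P"
  shows "coeff_bounded (real (Suc D) * c * coeff_norm Q) (D + degree Q) (P * Q)"
  unfolding coeff_bounded_def
proof safe
  show "degree (P * Q) \<le> D + degree Q"
    using assms degree_mult_le[of P Q] unfolding coeff_bounded_def by auto
  fix n
  have "\<bar>coeff (P * Q) n\<bar> \<le> (\<Sum>i\<le>n. \<bar>coeff P i\<bar> * coeff_norm Q)"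
    unfolding coeff_mult
    by (rule order.trans[OF sum_abs])
      (auto simp: abs_mult intro!: sum_mono mult_left_mono abs_coeff_le_coeff_norm)
  also have "\<dots> = (\<Sum>i\<le>n. \<bar>coeff P i\<bar>) * coeff_norm Q"
    by (simp add: sum_distrib_right)
  also have "\<dots> \<le> real (Suc D) * c * coeff_norm Q"
    by (intro mult_right_mono sum_abs_coeff_le_bounded assms coeff_norm_nonneg)
  finally show "\<bar>coeff (P * Q) n\<bar> \<le> real (Suc D) * c * coeff_norm Q" .
qed

lemma abs_poly_le_coeff_bounded:
  assumes "coeff_bounded c D P" "\<bar>x\<bar> \<le> R" "1 \<le> R"
  shows "\<bar>poly P x\<bar> \<le> real (Suc D) * c * R^D"
proof -
  have deg: "degree P \<le> D" and c: "\<And>k. \<bar>coeff P k\<bar> \<le> c"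
    using assms(1) unfolding coeff_bounded_def by auto
  have "poly P x = (\<Sum>i\<le>D. coeff P i * x^i)"
    unfolding poly_altdef using deg by (intro sum.mono_neutral_left) (auto simp: coeff_eq_0)
  also have "\<bar>\<dots>\<bar> \<le> (\<Sum>i\<le>D. c * R^D)"
  proof (rule order.trans[OF sum_abs], intro sum_mono)
    fix i assume i: "i \<in> {..D}"
    have "\<bar>x\<bar>^i \<le> R^D"
      using assms(2,3) i by (meson atMost_iff abs_ge_zero order.trans power_increasing power_mono)
    then show "\<bar>coeff P i * x ^ i\<bar> \<le> c * R ^ D"
      using c[of i] coeff_bounded_nonneg[OF assms(1)]
      by (simp add: abs_mult power_abs) (intro mult_mono, auto)
  qed
  finally show ?thesis by simp
qed

section \<open>The first-row control\<close>

definition root_disc :: "real \<Rightarrow> real \<Rightarrow> real \<Rightarrow> real" where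
  "root_disc B R E = B^4 - 8*R*E*B^2"

text \<open>The root of \<open>R l^2 + B l + 2 E = 0\<close> that vanishes with \<open>E\<close>, for either sign of \<open>B\<close>;
  in this rationalised form it stays smooth where \<open>R = 0\<close>.\<close>

definition small_root :: "real \<Rightarrow> real \<Rightarrow> real \<Rightarrow> real" where
  "small_root B R E = -4*E*B / (B^2 + sqrt (root_disc B R E))"

definition small_root_deriv ::
  "real \<Rightarrow> real \<Rightarrow> real \<Rightarrow> real \<Rightarrow> real \<Rightarrow> real \<Rightarrow> real" where
  "small_root_deriv B R E B' R' E' =
     ((-4*(E'*B + E*B')) * (B^2 + sqrt (root_disc B R E))
      - (-4*E*B) * (2*B*B' + inverse (sqrt (root_disc B R E)) / 2
          * (4*B^3*B' - 8*((R'*E + R*E')*B^2 + R*E*(2*B*B')))))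
     / (B^2 + sqrt (root_disc B R E))^2"

lemma small_root_zero [simp]: "small_root B R 0 = 0"
  and small_root_deriv_zero [simp]: "small_root_deriv B R 0 B' R' 0 = 0"
  unfolding small_root_def small_root_deriv_def by simp_all

lemma root_disc_posD:
  assumes "root_disc B R E > 0"
  shows "B \<noteq> 0" "B^2 + sqrt (root_disc B R E) > 0"
proof -
  show "B \<noteq> 0" using assms unfolding root_disc_def by auto
  show "B^2 + sqrt (root_disc B R E) > 0" using assms by (simp add: add_nonneg_pos)
qed

lemma small_root_quadratic:
  assumes "root_disc B R E > 0"
  shows "R * (small_root B R E)^2 + B * small_root B R E + 2*E = 0"
proof -
  define S where "S = sqrt (root_disc B R E)"
  define D where "D = B^2 + S"
  have S: "S^2 = B^4 - 8*R*E*B^2"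
    using assms unfolding S_def root_disc_def by simp
  have D: "D > 0" using root_disc_posD[OF assms] unfolding D_def S_def by simp
  define l where "l = small_root B R E"
  have lD: "l * D = -4*E*B"
    using D unfolding l_def small_root_def D_def S_def by simp
  have "(R * l^2 + B * l + 2*E) * D^2 = R * (l*D)^2 + B * (l*D) * D + 2*E*D^2"
    by (simp add: algebra_simps power2_eq_square)
  also have "\<dots> = 2*E*(8*R*E*B^2 + D*(D - 2*B^2))"
    unfolding lD by (simp add: algebra_simps power2_eq_square)
  also have "\<dots> = 0"
    using S unfolding D_def by (simp add: algebra_simps power2_eq_square power4_eq_xxxx)
  finally show ?thesis using D unfolding l_def by simp
qed

lemma small_root_has_derivative:
  assumes b: "(b has_real_derivative b') (at t within X)"
    and r: "(r has_real_derivative r') (at t within X)"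
    and e: "(e has_real_derivative e') (at t within X)"
    and disc: "root_disc (b t) (r t) (e t) > 0"
  shows "((\<lambda>t. small_root (b t) (r t) (e t))
    has_real_derivative small_root_deriv (b t) (r t) (e t) b' r' e') (at t within X)"
proof -
  let ?S = "\<lambda>t. sqrt (root_disc (b t) (r t) (e t))"
  have "((\<lambda>t. root_disc (b t) (r t) (e t)) has_real_derivative
      4*(b t)^3*b' - 8*((r'*e t + r t*e')*(b t)^2 + r t*e t*(2*b t*b'))) (at t within X)"
    unfolding root_disc_def using b r e
    by (auto intro!: derivative_eq_intros simp: algebra_simps power2_eq_square power3_eq_cube)
  from DERIV_chain2[OF DERIV_real_sqrt[OF disc] this]
  have "(?S has_real_derivative inverse (?S t) / 2
      * (4*(b t)^3*b' - 8*((r'*e t + r t*e')*(b t)^2 + r t*e t*(2*b t*b')))) (at t within X)"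
    by simp
  moreover have "((\<lambda>t. (b t)^2) has_real_derivative 2*b t*b') (at t within X)"
    using b by (auto intro!: derivative_eq_intros)
  ultimately have den: "((\<lambda>t. (b t)^2 + ?S t) has_real_derivative 2*b t*b' + inverse (?S t) / 2
      * (4*(b t)^3*b' - 8*((r'*e t + r t*e')*(b t)^2 + r t*e t*(2*b t*b')))) (at t within X)"
    using DERIV_add by blast
  have num: "((\<lambda>t. -4 * e t * b t) has_real_derivative -4*(e'*b t + e t*b')) (at t within X)"
    using b e by (auto intro!: derivative_eq_intros simp: algebra_simps)
  show ?thesis
    using DERIV_divide[OF num den] root_disc_posD(2)[OF disc]
    unfolding small_root_def small_root_deriv_def by (simp add: power2_eq_square)
qed

lemma continuous_on_small_root:
  assumes "continuous_on K b" "continuous_on K r" "continuous_on K e"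
    and disc: "\<forall>p\<in>K. root_disc (b p) (r p) (e p) > 0"
  shows "continuous_on K (\<lambda>p. small_root (b p) (r p) (e p))"
  unfolding small_root_def root_disc_def
  using disc root_disc_posD(2) unfolding root_disc_def
  by (intro continuous_intros assms) fastforce

lemma continuous_on_small_root_deriv:
  assumes "continuous_on K b" "continuous_on K r" "continuous_on K e"
    "continuous_on K b'" "continuous_on K r'" "continuous_on K e'"
    and disc: "\<forall>p\<in>K. root_disc (b p) (r p) (e p) > 0"
  shows "continuous_on K (\<lambda>p. small_root_deriv (b p) (r p) (e p) (b' p) (r' p) (e' p))"
  unfolding small_root_deriv_def
  using disc root_disc_posD(2) unfolding root_disc_def
  by (intro continuous_intros assms) fastforce+

lemma row_one_balance:
  fixes U1 U2 E l :: real
  assumes "(2*U1 - U2 + E) * l^2 + (4*U1 - U2 + 3*E) * l + 2*E = 0" and "\<bar>l\<bar> < 1/2"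
  shows "2*(1 + 1/(1+l))*U1 - (2/(2+l))*U2 = 4*U1 - U2 + E"
proof -
  have l: "1 + l \<noteq> 0" "2 + l \<noteq> 0" using assms(2) by auto
  have e: "2*U1*(2+l) - 2*U2*(1+l) = (2*U1 - U2 + E)*((1+l)*(2+l))"
    using assms(1) by (simp add: algebra_simps power2_eq_square)
  have "2*(1 + 1/(1+l))*U1 - (2/(2+l))*U2 = 2*U1 + (2*U1/(1+l) - 2*U2/(2+l))"
    using l(1) by (simp add: field_simps)
  also have "\<dots> = 2*U1 + (2*U1*(2+l) - 2*U2*(1+l))/((1+l)*(2+l))"
    using l by (simp add: field_simps)
  also have "\<dots> = 4*U1 - U2 + E"
    unfolding e using l by simp
  finally show ?thesis .
qed

definition row_lin :: "real \<Rightarrow> real \<Rightarrow> real \<Rightarrow> real" where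
  "row_lin U1 U2 E = 4*U1 - U2 + 3*E"

definition row_quad :: "real \<Rightarrow> real \<Rightarrow> real \<Rightarrow> real" where
  "row_quad U1 U2 E = 2*U1 - U2 + E"

definition row_disc :: "real \<Rightarrow> real \<Rightarrow> real \<Rightarrow> real" where
  "row_disc U1 U2 E = root_disc (row_lin U1 U2 E) (row_quad U1 U2 E) E"

definition row_control :: "real \<Rightarrow> real \<Rightarrow> real \<Rightarrow> real" where
  "row_control U1 U2 E = small_root (row_lin U1 U2 E) (row_quad U1 U2 E) E"

definition row_control_deriv :: "real \<Rightarrow> real \<Rightarrow> real \<Rightarrow> real \<Rightarrow> real \<Rightarrow> real \<Rightarrow> real" where
  "row_control_deriv U1 U2 E V1 V2 E' =
     small_root_deriv (row_lin U1 U2 E) (row_quad U1 U2 E) E (row_lin V1 V2 E') (row_quad V1 V2 E') E'"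

definition row_feasible :: "real \<Rightarrow> real \<Rightarrow> real \<Rightarrow> real \<Rightarrow> real \<Rightarrow> real \<Rightarrow> bool" where
  "row_feasible U1 U2 E V1 V2 E' \<longleftrightarrow> row_disc U1 U2 E > 0
     \<and> \<bar>row_control U1 U2 E\<bar> < 1/4 \<and> \<bar>row_control_deriv U1 U2 E V1 V2 E'\<bar> < 1/2"

lemma row_disc_no_flux: "row_disc U1 U2 0 = (4*U1 - U2)^4"
  and row_control_no_flux [simp]: "row_control U1 U2 0 = 0"
  and row_control_deriv_no_flux [simp]: "row_control_deriv U1 U2 0 V1 V2 0 = 0"
  unfolding row_disc_def row_control_def row_control_deriv_def root_disc_def row_lin_def
  by simp_all

lemma row_control_balance:
  assumes "E = 0 \<or> row_disc U1 U2 E > 0" and "\<bar>row_control U1 U2 E\<bar> < 1/2"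
  defines "l \<equiv> row_control U1 U2 E"
  shows "2*(1 + 1/(1+l))*U1 - (2/(2+l))*U2 = 4*U1 - U2 + E"
proof (rule row_one_balance)
  show "\<bar>l\<bar> < 1/2" using assms(2) unfolding l_def .
  show "(2*U1 - U2 + E) * l^2 + (4*U1 - U2 + 3*E) * l + 2*E = 0"
    using assms(1) small_root_quadratic[of "row_lin U1 U2 E" "row_quad U1 U2 E" E]
    unfolding l_def row_control_def row_disc_def row_lin_def row_quad_def by auto
qed

lemma row_control_has_derivative:
  assumes "(U1 has_real_derivative V1) (at t)" "(U2 has_real_derivative V2) (at t)"
    "(E has_real_derivative E') (at t)" and "row_disc (U1 t) (U2 t) (E t) > 0"
  shows "((\<lambda>s. row_control (U1 s) (U2 s) (E s))
    has_real_derivative row_control_deriv (U1 t) (U2 t) (E t) V1 V2 E') (at t)"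
  unfolding row_control_def row_control_deriv_def
  using assms unfolding row_disc_def row_lin_def row_quad_def
  by (intro small_root_has_derivative) (auto intro!: derivative_eq_intros)

lemma continuous_on_row_control:
  assumes "continuous_on K U1" "continuous_on K U2" "continuous_on K E"
    and "\<forall>p\<in>K. row_disc (U1 p) (U2 p) (E p) > 0"
  shows "continuous_on K (\<lambda>p. row_control (U1 p) (U2 p) (E p))"
  unfolding row_control_def using assms unfolding row_disc_def row_lin_def row_quad_def
  by (intro continuous_on_small_root continuous_intros) auto

lemma continuous_on_row_control_deriv:
  assumes "continuous_on K U1" "continuous_on K U2" "continuous_on K E"
    "continuous_on K V1" "continuous_on K V2" "continuous_on K E'"
    and "\<forall>p\<in>K. row_disc (U1 p) (U2 p) (E p) > 0"
  shows "continuous_on K (\<lambda>p. row_control_deriv (U1 p) (U2 p) (E p) (V1 p) (V2 p) (E' p))"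
  unfolding row_control_deriv_def using assms unfolding row_disc_def row_lin_def row_quad_def
  by (intro continuous_on_small_root_deriv continuous_intros) auto

section \<open>Uniform feasibility\<close>

lemma compact_uniform_positivity:
  fixes f :: "'b::metric_space \<times> 'a::euclidean_space \<Rightarrow> real"
  assumes "compact S" and "\<rho> > 0" and f: "continuous_on (S \<times> cball 0 \<rho>) f"
    and pos: "\<forall>t\<in>S. f (t,0) > 0"
  shows "\<exists>r>0. r \<le> \<rho> \<and> (\<forall>t\<in>S. \<forall>x. norm x \<le> r \<longrightarrow> f (t,x) > 0)"
proof (cases "S = {}")
  case True
  then show ?thesis using assms(2) by blast
next
  case False
  have "continuous_on S (\<lambda>t. f (t,0))"
    using assms(2) by (intro continuous_on_compose2[OF f]) (auto intro!: continuous_intros)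
  then obtain t0 where "t0 \<in> S" and min: "\<forall>t\<in>S. f (t0,0) \<le> f (t,0)"
    using continuous_attains_inf[OF assms(1) False] by blast
  then have m: "f (t0,0) > 0" using pos by blast
  have "uniformly_continuous_on (S \<times> cball 0 \<rho>) f"
    using f assms(1) by (intro compact_uniformly_continuous compact_Times) auto
  then obtain d where d: "d > 0" and
    uc: "\<forall>p\<in>S \<times> cball 0 \<rho>. \<forall>q\<in>S \<times> cball 0 \<rho>. dist q p < d \<longrightarrow> dist (f q) (f p) < f (t0,0)"
    using m unfolding uniformly_continuous_on_def by metis
  show ?thesis
  proof (intro exI[of _ "min \<rho> (d/2)"] conjI ballI allI impI)
    fix t x assume t: "t \<in> S" and x: "norm (x::'a) \<le> min \<rho> (d/2)"
    have "dist (t,x) (t,0) < d" using x d by (simp add: dist_Pair_Pair)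
    then have "dist (f (t,x)) (f (t,0)) < f (t0,0)"
      using uc t x assms(2) by auto
    then show "f (t,x) > 0" using min t by (auto simp: dist_real_def)
  qed (use assms(2) d in auto)
qed

definition feasible_radius ::
  "real set \<Rightarrow> (real \<Rightarrow> real) \<Rightarrow> (real \<Rightarrow> real) \<Rightarrow> (real \<Rightarrow> real) \<Rightarrow> (real \<Rightarrow> real) \<Rightarrow> real \<Rightarrow> bool" where
  "feasible_radius S U1 U2 V1 V2 r \<longleftrightarrow> (\<forall>t\<in>S. \<forall>a b e a' b' e'. norm ((a,b,e),(a',b',e')) \<le> r \<longrightarrow>
     row_feasible (U1 t + a) (U2 t + b) e (V1 t + a') (V2 t + b') e')"

lemma feasible_radius_mono:
  assumes "feasible_radius S U1 U2 V1 V2 r" "r' \<le> r"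
  shows "feasible_radius S U1 U2 V1 V2 r'"
proof -
  have "norm x \<le> r" if "norm x \<le> r'" for x :: "(real \<times> real \<times> real) \<times> real \<times> real \<times> real"
    using that assms(2) by linarith
  then show ?thesis using assms(1) unfolding feasible_radius_def by blast
qed

text \<open>Two applications of \<open>compact_uniform_positivity\<close>: the first keeps the discriminant
  positive, which makes the control continuous for the second.\<close>

lemma feasible_radius_exists:
  assumes "compact S"
    and cont: "continuous_on S U1" "continuous_on S U2" "continuous_on S V1" "continuous_on S V2"
    and nondeg: "\<forall>t\<in>S. 4 * U1 t - U2 t \<noteq> 0"
  shows "\<exists>r>0. feasible_radius S U1 U2 V1 V2 r"
proof -
  let ?x = "\<lambda>z::real \<times> (real \<times> real \<times> real) \<times> (real \<times> real \<times> real). snd z"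
  define P1 where "P1 z = U1 (fst z) + fst (fst (?x z))" for z
  define P2 where "P2 z = U2 (fst z) + fst (snd (fst (?x z)))" for z
  define E where "E z = snd (snd (fst (?x z)))" for z
  define Q1 where "Q1 z = V1 (fst z) + fst (snd (?x z))" for z
  define Q2 where "Q2 z = V2 (fst z) + fst (snd (snd (?x z)))" for z
  define E' where "E' z = snd (snd (snd (?x z)))" for z
  have fst: "continuous_on (S \<times> C) (\<lambda>z. W (fst z))" if "continuous_on S W" for W C
    by (rule continuous_on_compose2[OF that continuous_on_fst]) auto
  have cont: "continuous_on (S \<times> C) P1" "continuous_on (S \<times> C) P2" "continuous_on (S \<times> C) E"
    "continuous_on (S \<times> C) Q1" "continuous_on (S \<times> C) Q2" "continuous_on (S \<times> C) E'" for C
    unfolding P1_def P2_def E_def Q1_def Q2_def E'_def by (intro continuous_intros fst cont)+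
  define f1 where "f1 z = row_disc (P1 z) (P2 z) (E z)" for z
  have "continuous_on (S \<times> cball 0 1) f1"
    unfolding f1_def row_disc_def row_lin_def row_quad_def root_disc_def
    by (intro continuous_intros cont)
  moreover have "\<forall>t\<in>S. f1 (t,0) > 0"
    using nondeg unfolding f1_def P1_def P2_def E_def by (simp add: zero_prod_def row_disc_no_flux)
  ultimately obtain r1 where r1: "r1 > 0" "r1 \<le> 1" "\<forall>t\<in>S. \<forall>x. norm x \<le> r1 \<longrightarrow> f1 (t,x) > 0"
    using compact_uniform_positivity[OF assms(1), of 1 f1] by auto
  then have disc: "\<forall>z\<in>S \<times> cball 0 r1. row_disc (P1 z) (P2 z) (E z) > 0"
    unfolding f1_def by force
  define f2 where "f2 z = min (1/4 - \<bar>row_control (P1 z) (P2 z) (E z)\<bar>)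
    (1/2 - \<bar>row_control_deriv (P1 z) (P2 z) (E z) (Q1 z) (Q2 z) (E' z)\<bar>)" for z
  have "continuous_on (S \<times> cball 0 r1) f2"
    unfolding f2_def
    by (intro continuous_intros continuous_on_row_control continuous_on_row_control_deriv cont disc)
  moreover have "\<forall>t\<in>S. f2 (t,0) > 0"
    unfolding f2_def E_def E'_def by (simp add: zero_prod_def)
  ultimately obtain r2 where r2: "r2 > 0" "r2 \<le> r1" "\<forall>t\<in>S. \<forall>x. norm x \<le> r2 \<longrightarrow> f2 (t,x) > 0"
    using compact_uniform_positivity[OF assms(1) r1(1), of f2] by auto
  have "feasible_radius S U1 U2 V1 V2 r2"
    unfolding feasible_radius_def
  proof (intro ballI allI impI)
    fix t a b e a' b' e' :: real
    assume t: "t \<in> S" and x: "norm ((a,b,e),(a',b',e')) \<le> r2"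
    have "f1 (t,((a,b,e),(a',b',e'))) > 0"
      using r1(3) t x r2(2) by (meson order.trans)
    moreover have "f2 (t,((a,b,e),(a',b',e'))) > 0"
      using r2(3) t x by blast
    ultimately show "row_feasible (U1 t + a) (U2 t + b) e (V1 t + a') (V2 t + b') e'"
      unfolding f1_def f2_def P1_def P2_def E_def Q1_def Q2_def E'_def row_feasible_def by simp
  qed
  then show ?thesis using r2(1) by blast
qed

lemma norm_pair_of_triples_le:
  fixes a b c a' b' c' :: real
  shows "norm ((a,b,c),(a',b',c')) \<le> \<bar>a\<bar> + \<bar>b\<bar> + \<bar>c\<bar> + \<bar>a'\<bar> + \<bar>b'\<bar> + \<bar>c'\<bar>"
proof -
  have triple: "norm (x,y,z) \<le> \<bar>x\<bar> + \<bar>y\<bar> + \<bar>z\<bar>" for x y z :: real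
    using norm_Pair_le[of x "(y,z)"] norm_Pair_le[of y z] by simp
  show ?thesis
    using norm_Pair_le[of "(a,b,c)" "(a',b',c')"] triple[of a b c] triple[of a' b' c'] by simp
qed

section \<open>Sideways profiles\<close>

definition data_size :: "nat \<Rightarrow> nat \<Rightarrow> (nat \<times> nat \<Rightarrow> real) \<Rightarrow> (nat \<times> nat \<Rightarrow> real) \<Rightarrow> real" where
  "data_size M N d0 d1 = (\<Sum>p\<in>interior M N. \<bar>d0 p\<bar> + \<bar>d1 p\<bar>)"

lemma finite_interior: "finite (interior M N)"
  by (rule finite_subset[of _ "{0..M} \<times> {0..N}"]) (auto simp: interior_def)

lemma data_size_nonneg: "0 \<le> data_size M N d0 d1"
  unfolding data_size_def by (auto intro: sum_nonneg)

lemma abs_le_data_size: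
  assumes "p \<in> interior M N"
  shows "\<bar>d0 p\<bar> \<le> data_size M N d0 d1" "\<bar>d1 p\<bar> \<le> data_size M N d0 d1"
  using member_le_sum[of p "interior M N" "\<lambda>p. \<bar>d0 p\<bar> + \<bar>d1 p\<bar>"] assms finite_interior
  unfolding data_size_def by auto

lemma data_size_le:
  assumes "\<forall>p\<in>interior M N. \<bar>d0 p\<bar> < \<epsilon> \<and> \<bar>d1 p\<bar> < \<epsilon>"
  shows "data_size M N d0 d1 \<le> 2 * \<epsilon> * real (card (interior M N))"
proof -
  have "data_size M N d0 d1 \<le> (\<Sum>p\<in>interior M N. 2 * \<epsilon>)"
    unfolding data_size_def using assms by (intro sum_mono) fastforce
  then show ?thesis by (simp add: algebra_simps)
qed

locale grid_window =
  fixes h T :: real and M N :: nat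
  assumes h_pos: "h > 0" and T_pos: "T > 0" and M_ge_2: "M \<ge> 2"
begin

definition ends_factor :: "real poly" where
  "ends_factor = [:T/2,1:]^(2*M+2) * [:-1,1:]^(2*M+2)"

text \<open>Since \<open>1 - (1 - A)^n\<close> is a multiple of \<open>A\<close>, the polynomial \<open>flat_one\<close> is flat at
  both ends of the window, while it agrees with \<open>1\<close> up to order \<open>2*M\<close> at \<open>t = T\<close>.\<close>

definition flat_one :: "real poly" where
  "flat_one = 1 - (1 - smult (1 / poly ends_factor 0) ends_factor)^(2*M+1)"

lemma flat_ends_flat_one: "flat_ends T (2*M+2) flat_one"
proof -
  let ?A = "smult (1 / poly ends_factor 0) ends_factor"
  have "flat_one = ?A * (\<Sum>i<2*M+1. (1 - ?A)^(2*M+1 - Suc i))"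
    unfolding flat_one_def using power_diff_sumr2[of 1 "2*M+1" "1 - ?A"] by simp
  then have "?A dvd flat_one" by (metis dvd_triv_left)
  moreover have "poly ends_factor 0 \<noteq> 0"
    using T_pos unfolding ends_factor_def by simp
  then have "ends_factor dvd ?A" by (simp add: dvd_smult_cancel dvd_smult)
  moreover have "flat_ends T (2*M+2) ends_factor"
    unfolding flat_ends_def ends_factor_def by auto
  ultimately show ?thesis using flat_ends_dvd dvd_trans by blast
qed

lemma coeff_flat_one: "coeff flat_one 0 = 1" "1 \<le> k \<Longrightarrow> k \<le> 2*M \<Longrightarrow> coeff flat_one k = 0"
proof -
  let ?B = "1 - smult (1 / poly ends_factor 0) ends_factor"
  have "poly ends_factor 0 \<noteq> 0"
    using T_pos unfolding ends_factor_def by simp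
  then have "poly ?B 0 = 0" by simp
  then have "[:0,1:] dvd ?B" using poly_eq_0_iff_dvd[of ?B 0] by simp
  then have "monom 1 (2*M+1) dvd ?B^(2*M+1)"
    unfolding monom_altdef smult_1_left by (rule dvd_power_same)
  then have "k \<le> 2*M \<Longrightarrow> coeff (?B^(2*M+1)) k = 0" for k
    by (simp add: monom_1_dvd_iff')
  then show "coeff flat_one 0 = 1" "1 \<le> k \<Longrightarrow> k \<le> 2*M \<Longrightarrow> coeff flat_one k = 0"
    unfolding flat_one_def by simp_all
qed

text \<open>Constants of the profile bounds; they depend on the grid and the window only, not on the
  target data.\<close>

definition taylor_growth :: real where
  "taylor_growth = 1 + 4 / h^2"

definition profile_degree :: nat where
  "profile_degree = 2*M + degree flat_one"

definition seed_bound :: real where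
  "seed_bound = real (Suc (2*M)) * taylor_growth^(2*M) * coeff_norm flat_one"

definition step_growth :: real where
  "step_growth = real profile_degree ^ 2 * h^2 + 7"

definition window_bound :: real where
  "window_bound = real (Suc profile_degree) * (1 + real profile_degree)
     * step_growth^(M-1) * seed_bound * (1 + T)^profile_degree"

lemma taylor_growth_ge: "1 \<le> taylor_growth" "4 / h^2 \<le> taylor_growth"
  unfolding taylor_growth_def using h_pos by auto

lemma seed_bound_nonneg: "0 \<le> seed_bound"
  unfolding seed_bound_def using taylor_growth_ge coeff_norm_nonneg by auto

lemma step_growth_ge: "1 \<le> step_growth"
  unfolding step_growth_def by auto

lemma window_bound_nonneg: "0 \<le> window_bound"
  unfolding window_bound_def using seed_bound_nonneg step_growth_ge T_pos by auto

lemma small_data_radius: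
  assumes "r > 0"
  shows "\<exists>\<epsilon>>0. \<forall>d0 d1. (\<forall>p\<in>interior M N. \<bar>d0 p\<bar> < \<epsilon> \<and> \<bar>d1 p\<bar> < \<epsilon>)
    \<longrightarrow> 6 * window_bound * data_size M N d0 d1 \<le> r"
proof -
  define c where "c = 12 * (window_bound + 1) * (real (card (interior M N)) + 1)"
  have c: "c > 0" unfolding c_def using window_bound_nonneg by (simp add: add_nonneg_pos)
  have "6 * window_bound * data_size M N d0 d1 \<le> r"
    if "\<forall>p\<in>interior M N. \<bar>d0 p\<bar> < r / c \<and> \<bar>d1 p\<bar> < r / c" for d0 d1
  proof -
    have "6 * window_bound * data_size M N d0 d1 \<le> 6 * window_bound * (2 * (r / c) * real (card (interior M N)))"
      using data_size_le[OF that] window_bound_nonneg by (intro mult_left_mono) auto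
    also have "\<dots> = 12 * window_bound * real (card (interior M N)) * (r / c)"
      by (simp add: algebra_simps)
    also have "\<dots> \<le> c * (r / c)"
      using assms c window_bound_nonneg unfolding c_def
      by (intro mult_right_mono mult_mono) auto
    also have "\<dots> = r" using c by simp
    finally show ?thesis .
  qed
  then show ?thesis using assms c by (intro exI[of _ "r / c"]) auto
qed

end

locale sideways_profile = grid_window +
  fixes d0 d1 :: "nat \<times> nat \<Rightarrow> real"
begin

text \<open>Taylor coefficients at \<open>t = T\<close> of the formal solution of \<open>w'' + A(0) w = 0\<close> with
  \<open>w(T) = d0\<close>, \<open>w'(T) = d1\<close>; matching coefficients of \<open>(t - T)^k\<close> gives the recursion.\<close>

fun taylor_coeff :: "nat \<Rightarrow> nat \<Rightarrow> nat \<Rightarrow> real" where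
  "taylor_coeff 0 i j = (if (i,j) \<in> interior M N then d0 (i,j) else 0)"
| "taylor_coeff (Suc 0) i j = (if (i,j) \<in> interior M N then d1 (i,j) else 0)"
| "taylor_coeff (Suc (Suc k)) i j = (if (i,j) \<in> interior M N then
     (taylor_coeff k (i-1) j - 4 * taylor_coeff k i j + taylor_coeff k (i+1) j
       + taylor_coeff k i (j+1) + taylor_coeff k i (j-1))
       / (h^2 * (of_nat (Suc k) * of_nat (Suc (Suc k)))) else 0)"

lemma taylor_coeff_outside: "(i,j) \<notin> interior M N \<Longrightarrow> taylor_coeff k i j = 0"
  by (induction k i j rule: taylor_coeff.induct) auto

lemma taylor_coeff_recurrence:
  assumes "(i,j) \<in> interior M N"
  shows "h^2 * (real (Suc k) * real (Suc (Suc k))) * taylor_coeff (Suc (Suc k)) i j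
    = taylor_coeff k (i-1) j - 4 * taylor_coeff k i j + taylor_coeff k (i+1) j
      + taylor_coeff k i (j+1) + taylor_coeff k i (j-1)"
proof -
  have "h^2 * (real (Suc k) * real (Suc (Suc k))) \<noteq> 0" using h_pos by simp
  then show ?thesis using assms by (simp del: of_nat_Suc)
qed

definition taylor_poly :: "nat \<Rightarrow> real poly" where
  "taylor_poly j = (\<Sum>k\<le>2*M. monom (taylor_coeff k (M-1) j) k)"

text \<open>The profile is solved sideways, from row \<open>M-1\<close> down to row \<open>0\<close>, by reading the
  discrete wave equation at node \<open>(i+1,j)\<close> as a formula for row \<open>i\<close>. Each step costs two
  derivatives of flatness, whence the initial order \<open>2*M+2\<close>. Row \<open>0\<close> is not part of the
  state: it is the flux to be absorbed by the control.\<close>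

function profile :: "nat \<Rightarrow> nat \<Rightarrow> real poly" where
  "profile i j =
     (if M \<le> i \<or> \<not> (1 \<le> j \<and> j \<le> N - 1) then 0
      else if i = M - 1 then taylor_poly j * flat_one
      else smult (h^2) (pderiv (pderiv (profile (i+1) j))) + smult 4 (profile (i+1) j)
        - profile (i+2) j - profile (i+1) (j+1) - profile (i+1) (j-1))"
  by auto
termination by (relation "Wellfounded.measure (\<lambda>(i,j). M - i)") auto

declare profile.simps [simp del]

lemma profile_outside: "M \<le> i \<or> \<not> (1 \<le> j \<and> j \<le> N - 1) \<Longrightarrow> profile i j = 0"
  by (simp add: profile.simps)

lemma profile_recurrence:
  assumes "(i,j) \<in> interior M N"
  shows "profile (i-1) j = smult (h^2) (pderiv (pderiv (profile i j))) + smult 4 (profile i j)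
    - profile (i+1) j - profile i (j+1) - profile i (j-1)"
proof -
  have "i - 1 + 1 = i" "i - 1 + 2 = i + 1" "i - 1 \<noteq> M - 1" "\<not> M \<le> i - 1"
    using assms M_ge_2 by (auto simp: interior_def)
  then show ?thesis using assms by (subst profile.simps) (auto simp: interior_def)
qed

lemma flat_ends_profile: "flat_ends T (2*i+4) (profile i j)"
proof (induction i j rule: profile.induct)
  case (1 i j)
  show ?case
  proof (cases "M \<le> i \<or> \<not> (1 \<le> j \<and> j \<le> N - 1) \<or> i = M - 1")
    case True
    then show ?thesis
      using flat_ends_flat_one M_ge_2
      by (subst profile.simps) (auto intro: flat_ends_zero flat_ends_mult flat_ends_mono)
  next
    case False
    have deriv: "flat_ends T (2*i+4) (pderiv (pderiv (profile (i+1) j)))"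
      using "1.IH"(1) False flat_ends_pderiv[of T "Suc (2*i+4)"] flat_ends_pderiv[of T "2*i+4"]
      by (simp add: numeral_eq_Suc)
    have rows: "flat_ends T (2*i+4) (profile (i+1) j)" "flat_ends T (2*i+4) (profile (i+2) j)"
      "flat_ends T (2*i+4) (profile (i+1) (j+1))" "flat_ends T (2*i+4) (profile (i+1) (j-1))"
      using "1.IH" False by (auto intro: flat_ends_mono)
    show ?thesis using False deriv rows
      by (subst profile.simps) (auto intro!: flat_ends_add flat_ends_diff flat_ends_smult)
  qed
qed

lemma coeff_taylor_poly_flat_one:
  assumes "k \<le> 2*M"
  shows "coeff (taylor_poly j * flat_one) k = taylor_coeff k (M-1) j"
proof -
  have "coeff (taylor_poly j * flat_one) k = (\<Sum>i\<le>k. coeff (taylor_poly j) i * coeff flat_one (k - i))"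
    by (simp add: coeff_mult)
  also have "\<dots> = coeff (taylor_poly j) k * coeff flat_one 0"
    using assms by (subst sum.mono_neutral_right[of "{..k}" "{k}"]) (auto simp: coeff_flat_one)
  also have "\<dots> = taylor_coeff k (M-1) j"
    using assms by (simp add: coeff_flat_one taylor_poly_def coeff_sum coeff_monom)
  finally show ?thesis .
qed

lemma coeff_profile: "1 \<le> i \<Longrightarrow> k \<le> 2*i+2 \<Longrightarrow> coeff (profile i j) k = taylor_coeff k i j"
proof (induction i j arbitrary: k rule: profile.induct)
  case (1 i j)
  consider "M \<le> i \<or> \<not> (1 \<le> j \<and> j \<le> N - 1)" | "i = M - 1" "1 \<le> j" "j \<le> N - 1" "i < M"
    | "i < M - 1" "1 \<le> j" "j \<le> N - 1"
    by linarith
  then show ?case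
  proof cases
    case 1
    then show ?thesis
      by (simp add: profile_outside) (rule taylor_coeff_outside, auto simp: interior_def)
  next
    case 2
    then show ?thesis using "1.prems" coeff_taylor_poly_flat_one
      by (subst profile.simps) simp
  next
    case 3
    have node: "(i+1,j) \<in> interior M N" using 3 by (auto simp: interior_def)
    have IH: "coeff (profile (i+1) j) (k+2) = taylor_coeff (k+2) (i+1) j"
      "coeff (profile (i+1) j) k = taylor_coeff k (i+1) j"
      "coeff (profile (i+2) j) k = taylor_coeff k (i+2) j"
      "coeff (profile (i+1) (j+1)) k = taylor_coeff k (i+1) (j+1)"
      "coeff (profile (i+1) (j-1)) k = taylor_coeff k (i+1) (j-1)"
      using "1.IH" "1.prems" 3 by auto
    have "coeff (profile i j) k = h^2 * (of_nat (Suc k) * of_nat (Suc (Suc k)))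
        * taylor_coeff (Suc (Suc k)) (i+1) j + 4 * taylor_coeff k (i+1) j
        - taylor_coeff k (i+2) j - taylor_coeff k (i+1) (j+1) - taylor_coeff k (i+1) (j-1)"
      using profile_recurrence[OF node] IH by (simp add: coeff_pderiv mult_ac del: taylor_coeff.simps)
    also have "\<dots> = taylor_coeff k i j"
      using taylor_coeff_recurrence[OF node, of k] by simp
    finally show ?thesis .
  qed
qed

lemma coeff_profile_initial:
  assumes "(i,j) \<in> interior M N"
  shows "coeff (profile i j) 0 = d0 (i,j)" "coeff (pderiv (profile i j)) 0 = d1 (i,j)"
  using assms coeff_profile[of i 0 j] coeff_profile[of i 1 j]
  by (auto simp: interior_def coeff_pderiv)

abbreviation mu :: real where
  "mu \<equiv> data_size M N d0 d1"

lemma abs_taylor_coeff_le: "\<bar>taylor_coeff k i j\<bar> \<le> taylor_growth^k * mu"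
proof (induction k i j rule: taylor_coeff.induct)
  case (1 i j)
  then show ?case using abs_le_data_size data_size_nonneg by auto
next
  case (2 i j)
  have "\<bar>d1 (i,j)\<bar> \<le> mu" if "(i,j) \<in> interior M N"
    using abs_le_data_size(2)[OF that] .
  moreover have "mu \<le> taylor_growth * mu"
    using data_size_nonneg taylor_growth_ge mult_right_mono[of 1 taylor_growth mu] by simp
  ultimately show ?case using data_size_nonneg taylor_growth_ge by auto
next
  case (3 k i j)
  show ?case
  proof (cases "(i,j) \<in> interior M N")
    case False
    then show ?thesis using data_size_nonneg taylor_growth_ge by simp
  next
    case True
    let ?c = "h^2 * (real (Suc k) * real (Suc (Suc k)))"
    let ?X = "taylor_coeff k (i-1) j - 4 * taylor_coeff k i j + taylor_coeff k (i+1) j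
      + taylor_coeff k i (j+1) + taylor_coeff k i (j-1)"
    have "(2::real) \<le> real (Suc k) * real (Suc (Suc k))"
      using mult_mono[of 1 "real (Suc k)" 2 "real (Suc (Suc k))"] by simp
    then have c: "2 * h^2 \<le> ?c"
      using mult_right_mono[of 2 _ "h^2"] by (metis mult.commute zero_le_power2)
    have X: "\<bar>?X\<bar> \<le> 8 * (taylor_growth^k * mu)"
      using "3.IH"[OF True] unfolding abs_le_iff by linarith
    have "\<bar>taylor_coeff (Suc (Suc k)) i j\<bar> = \<bar>?X\<bar> / ?c"
      using True h_pos by (simp del: of_nat_Suc)
    also have "\<dots> \<le> 8 * (taylor_growth^k * mu) / (2 * h^2)"
      using X c h_pos data_size_nonneg taylor_growth_ge by (intro frac_le) auto
    also have "\<dots> = (4 / h^2) * (taylor_growth^k * mu)"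
      by simp
    also have "\<dots> \<le> taylor_growth * (taylor_growth * (taylor_growth^k * mu))"
      using taylor_growth_ge data_size_nonneg
      by (intro mult_mono mult_right_mono[of 1 taylor_growth, simplified]) auto
    finally show ?thesis by (simp add: mult_ac)
  qed
qed

lemma coeff_bounded_taylor_poly_flat_one:
  "coeff_bounded (seed_bound * mu) profile_degree (taylor_poly j * flat_one)"
proof -
  have "coeff_bounded (taylor_growth^(2*M) * mu) (2*M) (taylor_poly j)"
    unfolding coeff_bounded_def
  proof safe
    show "degree (taylor_poly j) \<le> 2*M"
      unfolding taylor_poly_def by (rule degree_le) (auto simp: coeff_sum coeff_monom)
    fix k
    have "taylor_growth^k * mu \<le> taylor_growth^(2*M) * mu" if "k \<le> 2*M"
      using that taylor_growth_ge data_size_nonneg by (intro mult_right_mono power_increasing) auto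
    then show "\<bar>coeff (taylor_poly j) k\<bar> \<le> taylor_growth^(2*M) * mu"
      using abs_taylor_coeff_le[of k "M-1" j] data_size_nonneg taylor_growth_ge
      by (auto simp: taylor_poly_def coeff_sum coeff_monom intro: order.trans)
  qed
  from coeff_bounded_mult[OF this, of flat_one] show ?thesis
    unfolding seed_bound_def profile_degree_def by (simp add: mult_ac)
qed

lemma coeff_bounded_profile:
  "coeff_bounded (step_growth^(M-1-i) * seed_bound * mu) profile_degree (profile i j)"
proof (induction i j rule: profile.induct)
  case (1 i j)
  have nonneg: "0 \<le> step_growth^n * seed_bound * mu" for n
    using step_growth_ge seed_bound_nonneg data_size_nonneg by auto
  consider "M \<le> i \<or> \<not> (1 \<le> j \<and> j \<le> N - 1)" | "i = M - 1" "\<not> M \<le> i"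
    | "i < M - 1" "1 \<le> j" "j \<le> N - 1"
    by linarith
  then show ?case
  proof cases
    case 1
    then show ?thesis using nonneg by (simp add: profile_outside coeff_bounded_zero)
  next
    case 2
    then show ?thesis using coeff_bounded_taylor_poly_flat_one
      by (subst profile.simps) (auto intro: coeff_bounded_zero simp: data_size_nonneg seed_bound_nonneg)
  next
    case 3
    let ?c = "step_growth^(M-1-(i+1)) * seed_bound * mu"
    have e: "M-1-i = Suc (M-1-(i+1))" "M-1-(i+2) \<le> M-1-(i+1)" using 3 by auto
    have mono: "step_growth^(M-1-(i+2)) * seed_bound * mu \<le> ?c"
      using e(2) step_growth_ge seed_bound_nonneg data_size_nonneg
      by (intro mult_right_mono power_increasing) auto
    have "coeff_bounded (step_growth^(M-1-(i+2)) * seed_bound * mu) profile_degree (profile (i+2) j)"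
      using "1.IH" 3 by auto
    then have rows: "coeff_bounded ?c profile_degree (profile (i+2) j)"
      "coeff_bounded ?c profile_degree (profile (i+1) j)"
      "coeff_bounded ?c profile_degree (profile (i+1) (j+1))"
      "coeff_bounded ?c profile_degree (profile (i+1) (j-1))"
      using "1.IH" 3 coeff_bounded_mono[OF _ mono] by auto
    have "profile i j = smult (h^2) (pderiv (pderiv (profile (i+1) j))) + smult 4 (profile (i+1) j)
        - profile (i+2) j - profile (i+1) (j+1) - profile (i+1) (j-1)"
      using profile_recurrence[of "i+1" j] 3 by (simp add: interior_def)
    then have "coeff_bounded (\<bar>h^2\<bar> * (real profile_degree * (real profile_degree * ?c))
        + \<bar>4\<bar> * ?c + ?c + ?c + ?c) profile_degree (profile i j)"
      by (simp only:)
        (intro coeff_bounded_add coeff_bounded_diff coeff_bounded_smult coeff_bounded_pderiv rows)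
    moreover have "\<bar>h^2\<bar> * (real profile_degree * (real profile_degree * ?c)) + \<bar>4\<bar> * ?c + ?c + ?c + ?c
        = step_growth^(M-1-i) * seed_bound * mu"
      unfolding e(1) step_growth_def by (simp add: algebra_simps power2_eq_square)
    ultimately show ?thesis by simp
  qed
qed

lemma abs_window_profile_le:
  "\<bar>window T (profile i j) t\<bar> \<le> window_bound * mu"
  "\<bar>window T (pderiv (profile i j)) t\<bar> \<le> window_bound * mu"
proof -
  let ?D = "profile_degree" and ?c = "step_growth^(M-1) * seed_bound * mu"
  have "step_growth^(M-1-i) \<le> step_growth^(M-1)"
    using step_growth_ge by (intro power_increasing) auto
  then have P: "coeff_bounded ?c ?D (profile i j)"
    using coeff_bounded_profile[of i j] seed_bound_nonneg data_size_nonneg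
    by (elim coeff_bounded_mono) (intro mult_right_mono, auto)
  have window_le: "\<bar>window T Q t\<bar> \<le> real (Suc ?D) * c * (1 + T)^?D" if "coeff_bounded c ?D Q" for c Q
    using abs_poly_le_coeff_bounded[OF that, of "t - T" "1 + T"] coeff_bounded_nonneg[OF that] T_pos
    unfolding window_def by auto
  have c: "0 \<le> ?c" "0 \<le> real (Suc ?D) * (1 + T)^?D"
    using step_growth_ge seed_bound_nonneg data_size_nonneg T_pos by auto
  have le: "real (Suc ?D) * c' * (1 + T)^?D \<le> window_bound * mu" if "c' \<le> (1 + real ?D) * ?c"
    for c'
    using mult_left_mono[OF that c(2)] unfolding window_bound_def by (simp add: mult_ac)
  show "\<bar>window T (profile i j) t\<bar> \<le> window_bound * mu"
    using window_le[OF P] le[of ?c] c(1) by (simp add: algebra_simps)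
  show "\<bar>window T (pderiv (profile i j)) t\<bar> \<le> window_bound * mu"
    using window_le[OF coeff_bounded_pderiv[OF P]] le[of "real ?D * ?c"] c(1)
    by (simp add: algebra_simps)
qed

end

section \<open>The controlled solution\<close>

lemma has_real_derivative_at_pos:
  assumes "(f has_real_derivative D) (at t within {0..})" and "t > 0"
  shows "(f has_real_derivative D) (at t)"
proof -
  have "(f has_real_derivative D) (at t within {0<..})"
    using assms(1) by (rule has_field_derivative_subset) auto
  moreover have "at t within {0<..} = at t" using assms(2) by (intro at_within_open) auto
  ultimately show ?thesis by simp
qed

locale reference_solution = grid_window +
  fixes F :: "real \<Rightarrow> nat \<times> nat \<Rightarrow> real" and u0 u1 :: "nat \<times> nat \<Rightarrow> real"
    and u v :: "real \<Rightarrow> nat \<times> nat \<Rightarrow> real"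
  assumes reference: "wave_sol h M N F (\<lambda>t j. 0) u0 u1 u v"
    and nondegenerate: "\<forall>t>0. \<forall>j\<in>{1..N-1}. (1/2) * u t (2,j) - 2 * u t (1,j) \<noteq> 0"
begin

lemma u_in_F: "t \<ge> 0 \<Longrightarrow> in_F M N (u t)"
  using reference unfolding wave_sol_def by simp

lemma u_initial: "u 0 = u0" "v 0 = u1"
  using reference unfolding wave_sol_def by simp_all

lemma u_has_derivative: "t \<ge> 0 \<Longrightarrow> ((\<lambda>s. u s p) has_real_derivative v t p) (at t within {0..})"
  using reference unfolding wave_sol_def by blast

lemma v_has_derivative: "t \<ge> 0 \<Longrightarrow> p \<in> interior M N \<Longrightarrow>
    ((\<lambda>s. v s p) has_real_derivative F t p - Aop h (\<lambda>j. 0) (u t) p) (at t within {0..})"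
  using reference unfolding wave_sol_def by blast

lemma u_outside: "t \<ge> 0 \<Longrightarrow> p \<notin> interior M N \<Longrightarrow> u t p = 0"
  using u_in_F unfolding in_F_def by blast

lemma v_outside:
  assumes "t > 0" "p \<notin> interior M N"
  shows "v t p = 0"
proof -
  have "((\<lambda>s. u s p) has_real_derivative v t p) (at t)"
    using u_has_derivative[of t p] assms(1) by (auto intro: has_real_derivative_at_pos)
  moreover have "((\<lambda>s. u s p) has_real_derivative 0) (at t)"
    by (rule has_field_derivative_transform_within_open[OF DERIV_const, of "{0<..}"])
      (use assms u_outside in auto)
  ultimately show ?thesis by (rule DERIV_unique)
qed

lemma continuous_on_u: "continuous_on {0<..} (\<lambda>t. u t p)"
proof (intro continuous_at_imp_continuous_on ballI)
  fix t :: real assume "t \<in> {0<..}"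
  then show "isCont (\<lambda>t. u t p) t"
    using u_has_derivative[of t p] by (auto intro: DERIV_isCont has_real_derivative_at_pos)
qed

lemma continuous_on_v: "continuous_on {0<..} (\<lambda>t. v t p)"
proof (cases "p \<in> interior M N")
  case True
  show ?thesis
  proof (intro continuous_at_imp_continuous_on ballI)
    fix t :: real assume "t \<in> {0<..}"
    then show "isCont (\<lambda>t. v t p) t"
      using v_has_derivative[of t p] True by (auto intro: DERIV_isCont has_real_derivative_at_pos)
  qed
next
  case False
  have "continuous_on {0<..} (\<lambda>t. 0::real)" by simp
  then show ?thesis
    by (rule continuous_on_cong[THEN iffD1, rotated 2]) (use v_outside False in auto)
qed

lemma reference_row_nonzero:
  assumes "t > 0" "j \<in> {1..N-1}"
  shows "4 * u t (1,j) - u t (2,j) \<noteq> 0"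
  using nondegenerate[rule_format, OF assms] by simp

definition control_radius :: "nat \<Rightarrow> real \<Rightarrow> bool" where
  "control_radius j = feasible_radius {T/2..T+1} (\<lambda>t. u t (1,j)) (\<lambda>t. u t (2,j)) (\<lambda>t. v t (1,j)) (\<lambda>t. v t (2,j))"

lemma control_radius_exists:
  assumes "j \<in> {1..N-1}"
  shows "\<exists>r>0. control_radius j r"
proof -
  have S: "{T/2..T+1} \<subseteq> {0<..}" using T_pos by auto
  then show ?thesis
    unfolding control_radius_def
    using continuous_on_subset[OF continuous_on_u S] continuous_on_subset[OF continuous_on_v S]
      reference_row_nonzero assms
    by (intro feasible_radius_exists) auto
qed

lemma control_radius_uniform: "\<exists>r>0. \<forall>j\<in>{1..N-1}. control_radius j r"
proof -
  have "eventually (\<lambda>r. control_radius j r) (at_right 0)" if j: "j \<in> {1..N-1}" for j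
  proof -
    obtain r where "r > 0" "control_radius j r" using control_radius_exists[OF j] by blast
    then show ?thesis
      unfolding eventually_at_right_field control_radius_def using feasible_radius_mono
      by (intro exI[of _ r]) auto
  qed
  then have "eventually (\<lambda>r. \<forall>j\<in>{1..N-1}. control_radius j r) (at_right 0)"
    by (intro eventually_ball_finite) auto
  then obtain b where "b > 0" "\<forall>r>0. r < b \<longrightarrow> (\<forall>j\<in>{1..N-1}. control_radius j r)"
    unfolding eventually_at_right_field by blast
  then show ?thesis by (intro exI[of _ "b/2"]) auto
qed

end

locale boundary_control = reference_solution + sideways_profile +
  fixes r :: real
  assumes radius: "\<forall>j\<in>{1..N-1}. control_radius j r"
    and data_small: "6 * window_bound * mu \<le> r"
begin

definition offset :: "real \<Rightarrow> nat \<times> nat \<Rightarrow> real" where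
  "offset t p = (if p \<in> interior M N then window T (profile (fst p) (snd p)) t else 0)"

definition offset_rate :: "real \<Rightarrow> nat \<times> nat \<Rightarrow> real" where
  "offset_rate t p = (if p \<in> interior M N then window T (pderiv (profile (fst p) (snd p))) t else 0)"

definition flux :: "nat \<Rightarrow> real \<Rightarrow> real" where
  "flux j t = - window T (profile 0 j) t"

definition flux_rate :: "nat \<Rightarrow> real \<Rightarrow> real" where
  "flux_rate j t = - window T (pderiv (profile 0 j)) t"

definition control :: "real \<Rightarrow> nat \<Rightarrow> real" where
  "control t j = row_control (u t (1,j) + offset t (1,j)) (u t (2,j) + offset t (2,j)) (flux j t)"

definition control_rate :: "real \<Rightarrow> nat \<Rightarrow> real" where
  "control_rate t j = row_control_deriv (u t (1,j) + offset t (1,j)) (u t (2,j) + offset t (2,j))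
     (flux j t) (v t (1,j) + offset_rate t (1,j)) (v t (2,j) + offset_rate t (2,j)) (flux_rate j t)"

definition state :: "real \<Rightarrow> nat \<times> nat \<Rightarrow> real" where
  "state t p = u t p + offset t p"

definition velocity :: "real \<Rightarrow> nat \<times> nat \<Rightarrow> real" where
  "velocity t p = v t p + offset_rate t p"

lemma offset_eq:
  assumes "1 \<le> i"
  shows "offset t (i,j) = window T (profile i j) t"
proof -
  have "profile i j = 0" if "(i,j) \<notin> interior M N"
    using that assms by (intro profile_outside) (auto simp: interior_def)
  then show ?thesis unfolding offset_def by auto
qed

lemma offset_outside_window:
  "t \<notin> {T/2..T+1} \<Longrightarrow> offset t p = 0 \<and> offset_rate t p = 0 \<and> flux j t = 0 \<and> flux_rate j t = 0"
  unfolding offset_def offset_rate_def flux_def flux_rate_def by (simp add: window_outside)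

lemma window_profile_has_derivative:
  "(window T (profile i j) has_real_derivative window T (pderiv (profile i j)) t) (at t)"
  "(window T (pderiv (profile i j)) has_real_derivative window T (pderiv (pderiv (profile i j))) t) (at t)"
proof -
  have "flat_ends T (Suc (Suc (2*i+2))) (profile i j)"
    using flat_ends_profile[of i j] by (simp add: numeral_eq_Suc)
  then have "flat_ends T 2 (profile i j)" "flat_ends T 2 (pderiv (profile i j))"
    by (auto intro: flat_ends_mono dest: flat_ends_pderiv)
  then show "(window T (profile i j) has_real_derivative window T (pderiv (profile i j)) t) (at t)"
    "(window T (pderiv (profile i j)) has_real_derivative window T (pderiv (pderiv (profile i j))) t) (at t)"
    using window_has_derivative[OF T_pos] by blast+
qed

lemma offset_has_derivative: "((\<lambda>s. offset s p) has_real_derivative offset_rate t p) (at t)"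
  unfolding offset_def offset_rate_def using window_profile_has_derivative(1) by auto

lemma offset_rate_has_derivative:
  "p \<in> interior M N \<Longrightarrow> ((\<lambda>s. offset_rate s p) has_real_derivative
     window T (pderiv (pderiv (profile (fst p) (snd p)))) t) (at t)"
  unfolding offset_rate_def using window_profile_has_derivative(2) by auto

lemma flux_has_derivative: "(flux j has_real_derivative flux_rate j t) (at t)"
  unfolding flux_def[abs_def] flux_rate_def
  by (auto intro!: derivative_eq_intros window_profile_has_derivative)

lemma norm_offset_jet_le:
  "norm ((offset t (1,j), offset t (2,j), flux j t), (offset_rate t (1,j), offset_rate t (2,j), flux_rate j t))
    \<le> r"
proof -
  have off: "\<bar>offset t (i,j)\<bar> \<le> window_bound * mu" "\<bar>offset_rate t (i,j)\<bar> \<le> window_bound * mu" for i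
    unfolding offset_def offset_rate_def
    using abs_window_profile_le data_size_nonneg window_bound_nonneg by auto
  have "\<bar>flux j t\<bar> \<le> window_bound * mu" "\<bar>flux_rate j t\<bar> \<le> window_bound * mu"
    unfolding flux_def flux_rate_def using abs_window_profile_le by auto
  then show ?thesis
    using off[of 1] off[of 2] norm_pair_of_triples_le[of "offset t (1,j)" "offset t (2,j)" "flux j t"
        "offset_rate t (1,j)" "offset_rate t (2,j)" "flux_rate j t"] data_small
    by linarith
qed

lemma control_outside_window:
  "t \<notin> {T/2..T+1} \<Longrightarrow> control t j = 0 \<and> control_rate t j = 0"
  unfolding control_def control_rate_def using offset_outside_window by simp

lemma row_feasible_control:
  assumes "j \<in> {1..N-1}" "t \<in> {T/2..T+1}"
  shows "row_feasible (u t (1,j) + offset t (1,j)) (u t (2,j) + offset t (2,j)) (flux j t)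
    (v t (1,j) + offset_rate t (1,j)) (v t (2,j) + offset_rate t (2,j)) (flux_rate j t)"
  using radius assms norm_offset_jet_le unfolding control_radius_def feasible_radius_def by blast

lemma row_disc_control:
  assumes "j \<in> {1..N-1}" "t > 0"
  shows "row_disc (u t (1,j) + offset t (1,j)) (u t (2,j) + offset t (2,j)) (flux j t) > 0"
proof (cases "t \<in> {T/2..T+1}")
  case True
  then show ?thesis using row_feasible_control assms(1) unfolding row_feasible_def by blast
next
  case False
  then show ?thesis
    using reference_row_nonzero assms offset_outside_window by (simp add: row_disc_no_flux)
qed

lemma abs_control_le:
  assumes "j \<in> {1..N-1}"
  shows "\<bar>control t j\<bar> \<le> 1/4" "\<bar>control_rate t j\<bar> \<le> 1/2"
  using row_feasible_control[OF assms, of t] control_outside_window[of t j]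
  unfolding row_feasible_def control_def control_rate_def by (cases "t \<in> {T/2..T+1}"; simp)+

lemma control_has_derivative:
  assumes j: "j \<in> {1..N-1}"
  shows "((\<lambda>s. control s j) has_real_derivative control_rate t j) (at t)"
proof (cases "t < T/2")
  case True
  have "((\<lambda>s. control s j) has_real_derivative 0) (at t)"
    by (rule has_field_derivative_transform_within_open[OF DERIV_const, of "{..<T/2}"])
      (use True control_outside_window in auto)
  then show ?thesis using True control_outside_window by simp
next
  case False
  then have t: "t > 0" using T_pos by simp
  have u: "((\<lambda>s. u s p) has_real_derivative v t p) (at t)" for p
    using u_has_derivative[of t p] t by (auto intro: has_real_derivative_at_pos)
  show ?thesis
    unfolding control_def control_rate_def
    using row_disc_control[OF j t] u offset_has_derivative flux_has_derivative
    by (intro row_control_has_derivative) (auto intro!: derivative_eq_intros)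
qed

lemma continuous_on_control_rate:
  assumes j: "j \<in> {1..N-1}"
  shows "continuous_on {0..} (\<lambda>t. control_rate t j)"
proof -
  have "continuous_on {..<T/2} (\<lambda>t. 0::real)" by simp
  then have early: "continuous_on {..<T/2} (\<lambda>t. control_rate t j)"
    by (rule continuous_on_cong[THEN iffD1, rotated 2]) (use control_outside_window in auto)
  have cont: "continuous_on {0<..} (\<lambda>t. offset t p)" "continuous_on {0<..} (\<lambda>t. offset_rate t p)"
    "continuous_on {0<..} (flux j)" "continuous_on {0<..} (flux_rate j)" for p
  proof -
    show "continuous_on {0<..} (\<lambda>t. offset t p)"
      by (rule DERIV_continuous_on, rule has_field_derivative_at_within, rule offset_has_derivative)
    show "continuous_on {0<..} (flux j)"
      by (rule DERIV_continuous_on, rule has_field_derivative_at_within, rule flux_has_derivative)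
    show "continuous_on {0<..} (\<lambda>t. offset_rate t p)"
    proof (cases "p \<in> interior M N")
      case True
      show ?thesis
        by (rule DERIV_continuous_on, rule has_field_derivative_at_within,
            rule offset_rate_has_derivative[OF True])
    next
      case False
      then show ?thesis unfolding offset_rate_def by simp
    qed
    have "continuous_on {0<..} (window T (pderiv (profile 0 j)))"
      by (rule DERIV_continuous_on, rule has_field_derivative_at_within,
          rule window_profile_has_derivative(2))
    then show "continuous_on {0<..} (flux_rate j)"
      unfolding flux_rate_def[abs_def] by (rule continuous_on_minus)
  qed
  have "continuous_on {0<..} (\<lambda>t. u t p + offset t p)" "continuous_on {0<..} (\<lambda>t. v t p + offset_rate t p)"
    for p
    using continuous_on_add[OF continuous_on_u cont(1)] continuous_on_add[OF continuous_on_v cont(2)]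
    by auto
  then have "continuous_on {0<..} (\<lambda>t. control_rate t j)"
    unfolding control_rate_def using row_disc_control[OF j]
    by (intro continuous_on_row_control_deriv cont(3,4)) auto
  with early have "continuous_on ({..<T/2} \<union> {0<..}) (\<lambda>t. control_rate t j)"
    by (intro continuous_on_open_Un) auto
  then show ?thesis by (rule continuous_on_subset) (use T_pos in auto)
qed

lemma admissible_control: "admissible N control"
  unfolding admissible_def
proof (intro exI[of _ control_rate] conjI)
  show "\<forall>j\<in>{1..N-1}. \<forall>t\<ge>0. ((\<lambda>s. control s j) has_real_derivative control_rate t j) (at t within {0..})"
    using control_has_derivative by (auto intro: has_field_derivative_at_within)
  show "\<forall>j\<in>{1..N-1}. continuous_on {0..} (\<lambda>t. control_rate t j)"
    using continuous_on_control_rate by blast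
  show "\<exists>c<1/2. \<forall>j\<in>{1..N-1}. \<forall>t\<ge>0. \<bar>control t j\<bar> \<le> c"
    using abs_control_le by (intro exI[of _ "1/4"]) auto
  show "\<forall>j\<in>{1..N-1}. \<exists>c<1. \<forall>t\<ge>0. \<bar>control_rate t j\<bar> \<le> c"
    using abs_control_le by (intro ballI exI[of _ "1/2"]) auto
qed

lemma window_profile_recurrence:
  assumes "(i,j) \<in> interior M N"
  shows "h^2 * window T (pderiv (pderiv (profile i j))) t = window T (profile (i-1) j) t
    - 4 * window T (profile i j) t + window T (profile (i+1) j) t
    + window T (profile i (j+1)) t + window T (profile i (j-1)) t"
  unfolding profile_recurrence[OF assms] by (simp add: window_add window_diff window_smult)

text \<open>The offset solves the unperturbed equation below row one; in row one its defect is the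
  flux, which the control absorbs through \<open>row_control_balance\<close>.\<close>

lemma offset_defect:
  assumes "t \<ge> 0" and ij: "(i,j) \<in> interior M N"
  shows "window T (pderiv (pderiv (profile i j))) t
    = Aop h (\<lambda>j. 0) (u t) (i,j) - Aop h (control t) (state t) (i,j)"
proof -
  have i: "1 \<le> i" and j: "j \<in> {1..N-1}" using ij by (auto simp: interior_def)
  have h: "h^2 \<noteq> 0" using h_pos by simp
  have rec: "window T (pderiv (pderiv (profile i j))) t = (window T (profile (i-1) j) t
      - 4 * window T (profile i j) t + window T (profile (i+1) j) t
      + window T (profile i (j+1)) t + window T (profile i (j-1)) t) / h^2"
    using window_profile_recurrence[OF ij, of t] h by (simp add: field_simps)
  have state: "state t (i',j') = u t (i',j') + window T (profile i' j') t" if "1 \<le> i'" for i' j'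
    unfolding state_def using offset_eq[OF that] by simp
  show ?thesis
  proof (cases "i = 1")
    case False
    then have "1 \<le> i - 1" using i by simp
    then show ?thesis
      using False i unfolding rec Aop_def by (simp add: state h diff_divide_distrib[symmetric])
  next
    case True
    let ?U1 = "state t (1,j)" and ?U2 = "state t (2,j)" and ?l = "control t j"
    have solvable: "flux j t = 0 \<or> row_disc ?U1 ?U2 (flux j t) > 0"
      using row_disc_control[OF j] offset_outside_window[of t] T_pos assms(1)
      unfolding state_def by (cases "t = 0") auto
    have "\<bar>?l\<bar> < 1/2" using abs_control_le(1)[OF j, of t] by simp
    then have balance: "2*(1 + 1/(1+?l))*?U1 - (2/(2+?l))*?U2 = 4*?U1 - ?U2 + flux j t"
      using row_control_balance[OF solvable] unfolding control_def state_def by simp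
    have "Aop h (control t) (state t) (1,j)
        = (4*?U1 - ?U2 + flux j t - state t (1,j+1) - state t (1,j-1)) / h^2"
      using balance by (simp add: Aop_def)
    moreover have "Aop h (\<lambda>j. 0) (u t) (1,j) = (4 * u t (1,j) - u t (2,j) - u t (1,j+1) - u t (1,j-1)) / h^2"
      by (simp add: Aop_def)
    ultimately show ?thesis
      using True rec by (simp add: state flux_def h diff_divide_distrib[symmetric] numeral_2_eq_2)
  qed
qed

lemma wave_sol_state: "wave_sol h M N F control u0 u1 state velocity"
  unfolding wave_sol_def
proof (intro conjI allI impI ballI)
  fix t :: real and p assume t: "t \<ge> 0"
  show "in_F M N (state t)"
    using u_in_F[OF t] unfolding in_F_def state_def offset_def by simp
  show "((\<lambda>s. state s p) has_real_derivative velocity t p) (at t within {0..})"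
    unfolding state_def[abs_def] velocity_def
    using DERIV_add[OF u_has_derivative[OF t] has_field_derivative_at_within[OF offset_has_derivative]] .
  assume p: "p \<in> interior M N"
  obtain i j where p_eq: "p = (i,j)" by (cases p)
  have "((\<lambda>s. velocity s p) has_real_derivative
      (F t p - Aop h (\<lambda>j. 0) (u t) p) + window T (pderiv (pderiv (profile i j))) t) (at t within {0..})"
    unfolding velocity_def[abs_def] p_eq
    using DERIV_add[OF v_has_derivative[OF t p] has_field_derivative_at_within[OF offset_rate_has_derivative[OF p]]]
    unfolding p_eq by simp
  then show "((\<lambda>s. velocity s p) has_real_derivative F t p - Aop h (control t) (state t) p)
      (at t within {0..})"
    using offset_defect[OF t p[unfolded p_eq]] p_eq by simp
next
  show "state 0 = u0" "velocity 0 = u1"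
    using u_initial offset_outside_window[of 0] T_pos
    unfolding state_def[abs_def] velocity_def[abs_def] by auto
qed

lemma state_at_T:
  assumes "p \<in> interior M N"
  shows "state T p = u T p + d0 p" "velocity T p = v T p + d1 p"
  using assms coeff_profile_initial[of "fst p" "snd p"] window_at_T[OF T_pos]
  unfolding state_def velocity_def offset_def offset_rate_def by auto

end

lemma (in reference_solution) exact_control:
  assumes radius: "\<forall>j\<in>{1..N-1}. control_radius j r" and z: "in_F M N z0" "in_F M N z1"
    and small: "6 * window_bound * data_size M N (\<lambda>p. z0 p - u T p) (\<lambda>p. z1 p - v T p) \<le> r"
  shows "\<exists>lam. admissible N lam \<and> (\<forall>t j. j \<in> {1..N-1} \<longrightarrow> \<bar>lam t j\<bar> \<le> 1/4)
    \<and> (\<exists>u' v'. wave_sol h M N F lam u0 u1 u' v' \<and> u' T = z0 \<and> v' T = z1)"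
proof -
  interpret boundary_control h T M N F u0 u1 u v "\<lambda>p. z0 p - u T p" "\<lambda>p. z1 p - v T p" r
    using radius small by unfold_locales auto
  have "state T p = z0 p \<and> velocity T p = z1 p" for p
  proof (cases "p \<in> interior M N")
    case True
    then show ?thesis using state_at_T by simp
  next
    case False
    then have "z0 p = 0" "z1 p = 0" using z unfolding in_F_def by blast+
    then show ?thesis using False u_outside[of T p] v_outside[of T p] T_pos
      unfolding state_def velocity_def offset_def offset_rate_def by simp
  qed
  then have "state T = z0" "velocity T = z1" by auto
  then show ?thesis using admissible_control abs_control_le(1) wave_sol_state by blast
qed

lemma (in reference_solution) local_exact_controllability:
  "\<exists>\<epsilon>>0. \<forall>z0 z1. in_F M N z0 \<and> in_F M N z1
     \<and> (\<forall>p\<in>interior M N. \<bar>z0 p - u T p\<bar> < \<epsilon> \<and> \<bar>z1 p - v T p\<bar> < \<epsilon>)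
     \<longrightarrow> (\<exists>lam. admissible N lam \<and> (\<forall>t\<in>{0..T}. \<forall>j\<in>{1..N-1}. \<bar>h * lam t j\<bar> < h)
       \<and> (\<exists>u' v'. wave_sol h M N F lam u0 u1 u' v' \<and> u' T = z0 \<and> v' T = z1))"
proof -
  obtain r where "r > 0" and radius: "\<forall>j\<in>{1..N-1}. control_radius j r"
    using control_radius_uniform by blast
  obtain \<epsilon> where "\<epsilon> > 0" and \<epsilon>: "\<forall>d0 d1. (\<forall>p\<in>interior M N. \<bar>d0 p\<bar> < \<epsilon> \<and> \<bar>d1 p\<bar> < \<epsilon>)
      \<longrightarrow> 6 * window_bound * data_size M N d0 d1 \<le> r"
    using small_data_radius[OF \<open>r > 0\<close>] by blast
  have scaled: "\<bar>h * l\<bar> < h" if "\<bar>l\<bar> \<le> 1/4" for l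
    using that h_pos by (simp add: abs_mult)
  show ?thesis
  proof (intro exI[of _ \<epsilon>] conjI allI impI)
    fix z0 z1
    assume target: "in_F M N z0 \<and> in_F M N z1
      \<and> (\<forall>p\<in>interior M N. \<bar>z0 p - u T p\<bar> < \<epsilon> \<and> \<bar>z1 p - v T p\<bar> < \<epsilon>)"
    then have "6 * window_bound * data_size M N (\<lambda>p. z0 p - u T p) (\<lambda>p. z1 p - v T p) \<le> r"
      using \<epsilon>[rule_format, of "\<lambda>p. z0 p - u T p" "\<lambda>p. z1 p - v T p"] by blast
    then obtain lam where "admissible N lam" and lam: "\<forall>t j. j \<in> {1..N-1} \<longrightarrow> \<bar>lam t j\<bar> \<le> 1/4"
      and "\<exists>u' v'. wave_sol h M N F lam u0 u1 u' v' \<and> u' T = z0 \<and> v' T = z1"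
      using exact_control[OF radius] target by blast
    moreover have "\<forall>t\<in>{0..T}. \<forall>j\<in>{1..N-1}. \<bar>h * lam t j\<bar> < h"
      using lam scaled by blast
    ultimately show "\<exists>lam. admissible N lam \<and> (\<forall>t\<in>{0..T}. \<forall>j\<in>{1..N-1}. \<bar>h * lam t j\<bar> < h)
       \<and> (\<exists>u' v'. wave_sol h M N F lam u0 u1 u' v' \<and> u' T = z0 \<and> v' T = z1)"
      by blast
  qed (rule \<open>\<epsilon> > 0\<close>)
qed

theorem theorem2p31:
  fixes h T :: real and M N :: nat
    and F :: "real \<Rightarrow> nat \<times> nat \<Rightarrow> real"
    and u0 u1 :: "nat \<times> nat \<Rightarrow> real"
    and u v :: "real \<Rightarrow> nat \<times> nat \<Rightarrow> real"
  assumes "h > 0" and "M \<ge> 2" and "N \<ge> 2" and "T > 0"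
    and "in_F M N u0" and "in_F M N u1"
    and "\<forall>t. in_F M N (F t)"
    and "\<forall>p. continuous_on {0..} (\<lambda>t. F t p)"
    and ref: "wave_sol h M N F (\<lambda>t j. 0) u0 u1 u v"
    and nondeg: "\<forall>t>0. \<forall>j\<in>{1..N-1}. (1/2) * u t (2,j) - 2 * u t (1,j) \<noteq> 0"
  shows "\<exists>\<delta>>0. \<exists>\<epsilon>>0. \<forall>z0 z1.
           in_F M N z0 \<and> in_F M N z1 \<and>
           (\<forall>p\<in>interior M N. \<bar>z0 p - u T p\<bar> < \<epsilon> \<and> \<bar>z1 p - v T p\<bar> < \<epsilon>)
           \<longrightarrow> (\<exists>lam. admissible N lam
                  \<and> (\<forall>t\<in>{0..T}. \<forall>j\<in>{1..N-1}. \<bar>h * lam t j\<bar> < \<delta>)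
                  \<and> (\<exists>u' v'. wave_sol h M N F lam u0 u1 u' v' \<and> u' T = z0 \<and> v' T = z1))"
proof -
  interpret reference_solution h T M N F u0 u1 u v
    using assms by unfold_locales auto
  show ?thesis
    using local_exact_controllability \<open>h > 0\<close> by blast
qed

end
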